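(* Let $X_0=0$ and $X_n=\sum_{j=1}^{X_{n-1}}\xi_{n,j}+\varepsilon_n$ for $n\ge 1$, where $\{\xi_{n,j},\varepsilon_n : n,j\in\mathbb N\}$ are independent nonnegative integer-valued random variables and, for each $n$, the $\xi_{n,j}$, $j\in\mathbb N$, are identically distributed. Let $G_n(x)=\mathbb E x^{\xi_{n,1}}$, $\rho_n=G_n'(1)=\mathbb E\xi_{n,1}$, and assume $G_n''(1)<\infty$ for all $n$. Assume that $\varepsilon_n\sim\mathrm{Bernoulli}(m_{n,1})$ and that (i) $\rho_n<1$ for all $n$, $\lim_{n\to\infty}\rho_n=1$, $\sum_{n=1}^\infty(1-\rho_n)=\infty$, and $\lim_{n\to\infty}G_n''(1)/(1-\rho_n)=0$; (ii) $\lim_{n\to\infty} m_{n,1}/(1-\rho_n)=\lambda$ for some $\lambda\ge 0$. Then $X_n$ converges in distribution to $\mathrm{Poisson}(\lambda)$.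
   Context: $\mathrm{Poisson}(0)$ denotes the point mass at $0$. $\mathrm{Bernoulli}(p)$ is the distribution with $\mathbb P(1)=p=1-\mathbb P(0)$. *)

theory Defs
  imports "HOL-Probability.Probability"
begin

text \<open>Poisson distribution with parameter lam \<ge> 0 on the naturals; Poisson(0) is the
  point mass at 0 (the library's poisson_pmf requires a positive rate).\<close>
definition poisson0_pmf :: "real \<Rightarrow> nat pmf" where
  "poisson0_pmf lam = (if lam = 0 then return_pmf 0 else poisson_pmf lam)"

definition bernoulli_nat_pmf :: "real \<Rightarrow> nat pmf" where
  "bernoulli_nat_pmf p = map_pmf (\<lambda>b. if b then 1 else 0) (bernoulli_pmf p)"

definition real_law :: "'a measure \<Rightarrow> ('a \<Rightarrow> nat) \<Rightarrow> real measure" where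
  "real_law M Y = distr M borel (\<lambda>\<omega>. real (Y \<omega>))"

end

theory Submission
  imports Defs
begin

text \<open>
  We work with generating functions \<open>\<phi>\<^sub>n(z) = E z^X\<^sub>n\<close> on the closed unit disc. Independence
  gives the recursion \<open>\<phi>\<^sub>n\<^sub>+\<^sub>1(z) = \<phi>\<^sub>n(G\<^sub>n\<^sub>+\<^sub>1(z)) \<cdot> (1 - m\<^sub>n\<^sub>+\<^sub>1 (1 - z))\<close>, where \<open>G\<^sub>n\<close> is the
  offspring generating function. We compare \<open>\<phi>\<^sub>n\<close> with the Poisson generating function
  \<open>\<psi>\<^sub>n(z) = exp (-\<lambda>(1 - \<pi>\<^sub>n)(1 - z))\<close>, \<open>\<pi>\<^sub>n = \<rho>\<^sub>1\<cdots>\<rho>\<^sub>n\<close>, which satisfies the same recursion up to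
  second-order errors. The error bound \<open>|\<phi>\<^sub>n(z) - \<psi>\<^sub>n(z)| \<le> d\<^sub>n |1 - z|\<close> holds with
  \<open>d\<^sub>n\<^sub>+\<^sub>1 = \<rho>\<^sub>n\<^sub>+\<^sub>1 d\<^sub>n + c\<^sub>n\<^sub>+\<^sub>1\<close> and \<open>c\<^sub>n = o(1 - \<rho>\<^sub>n)\<close>; since \<open>\<Sum>(1 - \<rho>\<^sub>n) = \<infinity>\<close>, both \<open>\<pi>\<^sub>n\<close> and \<open>d\<^sub>n\<close>
  tend to \<open>0\<close>, so \<open>\<phi>\<^sub>n \<rightarrow> exp (-\<lambda>(1 - z))\<close>. On the unit circle these are characteristic functions,
  and Levy's continuity theorem yields convergence in distribution.
\<close>

subsection \<open>Products and linear recursions driven by a divergent series\<close>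

text \<open>If \<open>\<Sum>(1 - r\<^sub>n) = \<infinity>\<close> then the tail products \<open>\<Prod>r\<^sub>j\<close> vanish, since \<open>r \<le> exp (r - 1)\<close>.\<close>
lemma prod_tail_tendsto_zero:
  fixes r :: "nat \<Rightarrow> real"
  assumes r0: "\<And>n. 1 \<le> n \<Longrightarrow> 0 \<le> r n"
    and div: "filterlim (\<lambda>N. \<Sum>n = 1..N. 1 - r n) at_top sequentially"
  shows "(\<lambda>n. \<Prod>j = Suc N0..n. r j) \<longlonglongrightarrow> 0"
proof -
  have split: "(\<Sum>j = 1..n. 1 - r j) - (\<Sum>j = 1..N0. 1 - r j) = (\<Sum>j = Suc N0..n. 1 - r j)"
    if "N0 \<le> n" for n
  proof -
    have "{1..n} = {1..N0} \<union> {Suc N0..n}" "{1..N0} \<inter> {Suc N0..n} = {}" using that by auto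
    thus ?thesis by (simp add: sum.union_disjoint)
  qed
  have "filterlim (\<lambda>n. (\<Sum>j = 1..n. 1 - r j) - (\<Sum>j = 1..N0. 1 - r j)) at_top sequentially"
    using filterlim_tendsto_add_at_top[OF tendsto_const[of "- (\<Sum>j = 1..N0. 1 - r j)"] div] by simp
  hence tail: "filterlim (\<lambda>n. \<Sum>j = Suc N0..n. 1 - r j) at_top sequentially"
    by (rule filterlim_cong[OF refl refl, THEN iffD1, rotated])
       (use split in \<open>auto intro: eventually_sequentiallyI[of N0]\<close>)
  have exp_tail: "(\<lambda>n. exp (- (\<Sum>j = Suc N0..n. 1 - r j))) \<longlonglongrightarrow> 0"
    using filterlim_compose[OF exp_at_bot filterlim_compose[OF filterlim_uminus_at_bot_at_top tail]]
    by (simp add: o_def)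
  have upper: "(\<Prod>j = Suc N0..n. r j) \<le> exp (- (\<Sum>j = Suc N0..n. 1 - r j))" for n
  proof -
    have "(\<Prod>j = Suc N0..n. r j) \<le> (\<Prod>j = Suc N0..n. exp (r j - 1))"
      using r0 exp_ge_add_one_self[of "r _ - 1"] by (intro prod_mono) auto
    also have "\<dots> = exp (- (\<Sum>j = Suc N0..n. 1 - r j))"
      by (simp add: exp_sum[symmetric] sum_negf[symmetric])
    finally show ?thesis .
  qed
  show ?thesis
    using r0 upper
    by (intro tendsto_sandwich[OF _ _ tendsto_const exp_tail] always_eventually allI prod_nonneg) auto
qed

lemma linear_recursion_tendsto_zero:
  fixes r c d :: "nat \<Rightarrow> real"
  assumes r0: "\<And>n. 1 \<le> n \<Longrightarrow> 0 \<le> r n" and r1: "\<And>n. 1 \<le> n \<Longrightarrow> r n < 1"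
    and div: "filterlim (\<lambda>N. \<Sum>n = 1..N. 1 - r n) at_top sequentially"
    and c0: "\<And>n. 1 \<le> n \<Longrightarrow> 0 \<le> c n"
    and c_small: "(\<lambda>n. c n / (1 - r n)) \<longlonglongrightarrow> 0"
    and d0: "0 \<le> d 0"
    and dS: "\<And>n. d (Suc n) = r (Suc n) * d n + c (Suc n)"
  shows "d \<longlonglongrightarrow> 0"
proof (rule LIMSEQ_I)
  have d_nonneg: "0 \<le> d n" for n
    by (induction n) (auto simp: dS c0 r0 d0)
  fix e :: real assume e: "0 < e"
  obtain N0 where N0: "\<And>n. n \<ge> N0 \<Longrightarrow> c n / (1 - r n) < e / 2"
    using order_tendstoD(2)[OF c_small, of "e / 2"] e by (auto simp: eventually_sequentially)
  define N where "N = Suc N0"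
  have c_le: "c n \<le> e / 2 * (1 - r n)" if "n \<ge> N" for n
    using N0[of n] r1[of n] that by (simp add: N_def field_simps)
  text \<open>Beyond \<open>N\<close>, the excess of \<open>d\<close> over \<open>e/2\<close> is contracted by the factors \<open>r\<close>.\<close>
  have contract: "d n - e / 2 \<le> (\<Prod>j = Suc N..n. r j) * d N" if "n \<ge> N" for n
    using that
  proof (induction n rule: dec_induct)
    case base then show ?case using e by simp
  next
    case (step n)
    have "d (Suc n) - e / 2 \<le> r (Suc n) * (d n - e / 2)"
      using c_le[of "Suc n"] step.hyps by (simp add: dS algebra_simps)
    also have "\<dots> \<le> r (Suc n) * ((\<Prod>j = Suc N..n. r j) * d N)"
      using step.IH r0[of "Suc n"] by (intro mult_left_mono) auto
    also have "\<dots> = (\<Prod>j = Suc N..Suc n. r j) * d N"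
      using step.hyps by (simp add: prod.nat_ivl_Suc' mult_ac)
    finally show ?case .
  qed
  have "(\<lambda>n. (\<Prod>j = Suc N..n. r j) * d N) \<longlonglongrightarrow> 0 * d N"
    by (intro tendsto_mult prod_tail_tendsto_zero[OF r0 div] tendsto_const) auto
  from order_tendstoD(2)[OF this, of "e / 2"] e
  obtain N' where N': "\<And>n. n \<ge> N' \<Longrightarrow> (\<Prod>j = Suc N..n. r j) * d N < e / 2"
    by (auto simp: eventually_sequentially)
  show "\<exists>n0. \<forall>n\<ge>n0. norm (d n - 0) < e"
  proof (intro exI allI impI)
    fix n assume "max N N' \<le> n"
    with contract[of n] N'[of n] d_nonneg[of n] show "norm (d n - 0) < e" by auto
  qed
qed

text \<open>Under the hypotheses of the theorem, the one-step error of the Poisson approximation is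
  \<open>o(1 - \<rho>\<^sub>n)\<close>.\<close>
lemma error_rate_tendsto_zero:
  fixes \<rho> G2 m :: "nat \<Rightarrow> real" and lam K L :: real
  assumes rho_lt: "\<And>n. 1 \<le> n \<Longrightarrow> \<rho> n < 1"
    and rho_lim: "\<rho> \<longlonglongrightarrow> 1"
    and G2_lim: "(\<lambda>n. G2 n / (1 - \<rho> n)) \<longlonglongrightarrow> 0"
    and m_lim: "(\<lambda>n. m n / (1 - \<rho> n)) \<longlonglongrightarrow> lam"
  shows "(\<lambda>n. (K * G2 n + \<bar>m n - lam * (1 - \<rho> n)\<bar> + L * (1 - \<rho> n)\<^sup>2) / (1 - \<rho> n))
           \<longlonglongrightarrow> 0"
proof -
  have "(\<lambda>n. K * (G2 n / (1 - \<rho> n)) + \<bar>m n / (1 - \<rho> n) - lam\<bar> + L * (1 - \<rho> n))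
      \<longlonglongrightarrow> K * 0 + \<bar>lam - lam\<bar> + L * (1 - 1)"
    by (intro tendsto_intros G2_lim m_lim rho_lim)
  moreover have "eventually (\<lambda>n. K * (G2 n / (1 - \<rho> n)) + \<bar>m n / (1 - \<rho> n) - lam\<bar> + L * (1 - \<rho> n)
      = (K * G2 n + \<bar>m n - lam * (1 - \<rho> n)\<bar> + L * (1 - \<rho> n)\<^sup>2) / (1 - \<rho> n)) sequentially"
  proof (rule eventually_sequentiallyI[of 1])
    fix n :: nat assume "1 \<le> n"
    hence pos: "0 < 1 - \<rho> n" using rho_lt by simp
    hence "\<bar>m n / (1 - \<rho> n) - lam\<bar> = \<bar>m n - lam * (1 - \<rho> n)\<bar> / (1 - \<rho> n)"
      by (simp add: field_simps)
    with pos show "K * (G2 n / (1 - \<rho> n)) + \<bar>m n / (1 - \<rho> n) - lam\<bar> + L * (1 - \<rho> n)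
      = (K * G2 n + \<bar>m n - lam * (1 - \<rho> n)\<bar> + L * (1 - \<rho> n)\<^sup>2) / (1 - \<rho> n)"
      by (simp add: add_divide_distrib power2_eq_square)
  qed
  ultimately show ?thesis by (simp add: Lim_transform_eventually)
qed

subsection \<open>The Poisson generating function\<close>

lemma norm_mult_contraction:
  fixes x c :: complex
  assumes "norm c \<le> 1"
  shows "norm (x * c) \<le> norm x" "norm (c * x) \<le> norm x"
proof -
  have "norm x * norm c \<le> norm x" using assms by (intro mult_right_le_one_le) auto
  thus "norm (x * c) \<le> norm x" "norm (c * x) \<le> norm x" by (simp_all only: norm_mult mult.commute)
qed

definition poisson_gf :: "real \<Rightarrow> complex \<Rightarrow> complex" where
  "poisson_gf a z = exp (- (of_real a * (1 - z)))"

lemma norm_poisson_gf_le1: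
  assumes "0 \<le> a" "norm z \<le> 1"
  shows "norm (poisson_gf a z) \<le> 1"
proof -
  have "Re z \<le> 1" using complex_Re_le_cmod[of z] assms by linarith
  thus ?thesis using assms by (simp add: poisson_gf_def norm_exp_eq_Re mult_nonneg_nonneg)
qed

text \<open>Composing with the mean-\<open>r\<close> linear map and multiplying by a second factor adds parameters;
  this is how \<open>\<psi>\<^sub>n\<close> satisfies the branching recursion exactly.\<close>
lemma poisson_gf_compose:
  "poisson_gf a (1 - of_real r * (1 - w)) * poisson_gf b w = poisson_gf (a * r + b) w"
  by (simp add: poisson_gf_def exp_add[symmetric] algebra_simps)

lemma norm_affine_le1:
  fixes w :: complex
  assumes "0 \<le> p" "p \<le> 1" "norm w \<le> 1"
  shows "norm (1 - of_real p * (1 - w)) \<le> 1"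
proof -
  have "norm (of_real (1 - p) + of_real p * w) \<le> (1 - p) + p * norm w"
    using norm_triangle_ineq[of "of_real (1 - p)" "of_real p * w"] assms
    by (simp add: norm_mult del: of_real_diff)
  also have "\<dots> \<le> 1" using assms mult_left_le[of "norm w" p] by simp
  finally show ?thesis by (simp add: algebra_simps)
qed

lemma poisson_gf_lipschitz:
  assumes a: "0 \<le> a" and z1: "norm z1 \<le> 1" and z2: "norm z2 \<le> 1"
  shows "norm (poisson_gf a z1 - poisson_gf a z2) \<le> exp (2 * a) * a * norm (z1 - z2)"
proof -
  define p where "p = of_real a * (z1 - z2)"
  have p_norm: "norm p = a * norm (z1 - z2)" using a by (simp add: p_def norm_mult)
  have "norm (z1 - z2) \<le> 2" using norm_triangle_ineq4[of z1 z2] z1 z2 by simp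
  hence p_le: "norm p \<le> 2 * a" using a p_norm by (simp add: mult.commute mult_left_mono)
  have "poisson_gf a z1 - poisson_gf a z2 = poisson_gf a z2 * (exp p - 1)"
    by (simp add: poisson_gf_def p_def exp_add[symmetric] algebra_simps)
  hence "norm (poisson_gf a z1 - poisson_gf a z2) \<le> norm (exp p - 1)"
    using norm_mult_contraction(2)[OF norm_poisson_gf_le1[OF a z2]] by simp
  also have "\<dots> \<le> exp (norm p) * norm p" using Taylor_exp_field[of p 0] by simp
  also have "\<dots> \<le> exp (2 * a) * (a * norm (z1 - z2))"
    using p_le p_norm a by (intro mult_mono) auto
  finally show ?thesis by (simp add: mult_ac)
qed

text \<open>Bernoulli versus Poisson generating functions: they agree to first order when \<open>m = b\<close>,
  the second-order term coming from the Taylor expansion of \<open>exp\<close>.\<close>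
lemma bernoulli_poisson_gf_diff:
  fixes w :: complex
  assumes b: "0 \<le> b" and w: "norm w \<le> 1"
  shows "norm ((1 - of_real m * (1 - w)) - poisson_gf b w)
           \<le> (\<bar>m - b\<bar> + 2 * exp (2 * b) * b\<^sup>2) * norm (1 - w)"
proof -
  define x where "x = - (of_real b * (1 - w))"
  have u2: "norm (1 - w) \<le> 2" using norm_triangle_ineq4[of 1 w] w by simp
  have x_norm: "norm x = b * norm (1 - w)" using b by (simp add: x_def norm_mult)
  have "norm (exp x - 1 - x) \<le> exp (norm x) * (norm x)\<^sup>2"
    using Taylor_exp_field[of x 1] by (simp add: power2_eq_square algebra_simps)
  also have "\<dots> \<le> exp (2 * b) * (2 * b\<^sup>2 * norm (1 - w))"
  proof (rule mult_mono)
    show "exp (norm x) \<le> exp (2 * b)" using x_norm u2 b by (simp add: mult.commute mult_left_mono)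
    show "(norm x)\<^sup>2 \<le> 2 * b\<^sup>2 * norm (1 - w)"
    proof -
      have "(norm x)\<^sup>2 = b\<^sup>2 * norm (1 - w) * norm (1 - w)"
        by (simp add: x_norm power2_eq_square)
      also have "\<dots> \<le> b\<^sup>2 * norm (1 - w) * 2" using u2 by (intro mult_left_mono) auto
      finally show ?thesis by simp
    qed
  qed auto
  finally have taylor: "norm (exp x - 1 - x) \<le> 2 * exp (2 * b) * b\<^sup>2 * norm (1 - w)"
    by (simp add: mult_ac)
  have "(1 - of_real m * (1 - w)) - poisson_gf b w = of_real (b - m) * (1 - w) - (exp x - 1 - x)"
    by (simp add: poisson_gf_def x_def algebra_simps)
  also have "norm \<dots> \<le> \<bar>m - b\<bar> * norm (1 - w) + norm (exp x - 1 - x)"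
    using norm_triangle_ineq4 by (metis abs_minus_commute norm_mult norm_of_real)
  finally show ?thesis using taylor by (simp add: algebra_simps)
qed

text \<open>The three error terms are: the old
  error contracted by \<open>r\<close>, the nonlinearity of the offspring law, and the immigration error.\<close>
lemma gf_error_step:
  fixes f :: "complex \<Rightarrow> complex" and w z :: complex
  assumes f_err: "\<And>y. norm y \<le> 1 \<Longrightarrow> norm (f y - poisson_gf a y) \<le> d * norm (1 - y)"
    and a: "0 \<le> a" and d: "0 \<le> d" and b: "0 \<le> b"
    and r: "0 \<le> r" "r \<le> 1" and m: "0 \<le> m" "m \<le> 1"
    and w: "norm w \<le> 1" and z: "norm z \<le> 1"
    and z_mean: "norm (1 - z) \<le> r * norm (1 - w)"
    and z_lin: "norm (z - (1 - of_real r * (1 - w))) \<le> g * norm (1 - w)"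
  shows "norm (f z * (1 - of_real m * (1 - w)) - poisson_gf (a * r + b) w)
           \<le> (r * d + exp (2 * a) * a * g + \<bar>m - b\<bar> + 2 * exp (2 * b) * b\<^sup>2) * norm (1 - w)"
proof -
  define B where "B = 1 - of_real m * (1 - w)"
  define z' where "z' = 1 - of_real r * (1 - w)"
  have B: "norm B \<le> 1" unfolding B_def by (rule norm_affine_le1[OF m w])
  have z': "norm z' \<le> 1" unfolding z'_def by (rule norm_affine_le1[OF r w])
  have "poisson_gf (a * r + b) w = poisson_gf a z' * poisson_gf b w"
    by (simp add: z'_def poisson_gf_compose)
  hence decomp: "f z * B - poisson_gf (a * r + b) w
      = (f z - poisson_gf a z) * B + (poisson_gf a z - poisson_gf a z') * B
        + poisson_gf a z' * (B - poisson_gf b w)"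
    by (simp add: ring_distribs)
  have t1: "norm ((f z - poisson_gf a z) * B) \<le> r * d * norm (1 - w)"
  proof -
    have "norm ((f z - poisson_gf a z) * B) \<le> d * norm (1 - z)"
      by (rule order_trans[OF norm_mult_contraction(1)[OF B] f_err[OF z]])
    also have "\<dots> \<le> d * (r * norm (1 - w))" using z_mean d by (rule mult_left_mono)
    finally show ?thesis by (simp add: mult_ac)
  qed
  have t2: "norm ((poisson_gf a z - poisson_gf a z') * B) \<le> exp (2 * a) * a * g * norm (1 - w)"
  proof -
    have "norm ((poisson_gf a z - poisson_gf a z') * B) \<le> exp (2 * a) * a * norm (z - z')"
      by (rule order_trans[OF norm_mult_contraction(1)[OF B] poisson_gf_lipschitz[OF a z z']])
    also have "\<dots> \<le> exp (2 * a) * a * (g * norm (1 - w))"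
      using z_lin a by (intro mult_left_mono) (auto simp: z'_def)
    finally show ?thesis by (simp add: mult_ac)
  qed
  have t3: "norm (poisson_gf a z' * (B - poisson_gf b w))
      \<le> (\<bar>m - b\<bar> + 2 * exp (2 * b) * b\<^sup>2) * norm (1 - w)"
    unfolding B_def
    by (rule order_trans[OF norm_mult_contraction(2)[OF norm_poisson_gf_le1[OF a z']]
          bernoulli_poisson_gf_diff[OF b w]])
  have "norm (f z * B - poisson_gf (a * r + b) w)
      \<le> r * d * norm (1 - w) + exp (2 * a) * a * g * norm (1 - w)
        + (\<bar>m - b\<bar> + 2 * exp (2 * b) * b\<^sup>2) * norm (1 - w)"
    unfolding decomp
    by (rule order_trans[OF norm_triangle_ineq
          add_mono[OF order_trans[OF norm_triangle_ineq add_mono[OF t1 t2]] t3]])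
  thus ?thesis unfolding B_def by (simp add: distrib_right add.assoc)
qed

lemma gf_error_bound:
  fixes \<phi> G :: "nat \<Rightarrow> complex \<Rightarrow> complex" and \<rho> m G2 d :: "nat \<Rightarrow> real" and lam :: real
  assumes \<phi>0: "\<And>w. \<phi> 0 w = 1"
    and \<phi>S: "\<And>n w. norm w \<le> 1 \<Longrightarrow> \<phi> (Suc n) w = \<phi> n (G (Suc n) w) * (1 - of_real (m (Suc n)) * (1 - w))"
    and G_disc: "\<And>n w. 1 \<le> n \<Longrightarrow> norm w \<le> 1 \<Longrightarrow> norm (G n w) \<le> 1"
    and G_mean: "\<And>n w. 1 \<le> n \<Longrightarrow> norm w \<le> 1 \<Longrightarrow> norm (1 - G n w) \<le> \<rho> n * norm (1 - w)"
    and G_lin: "\<And>n w. 1 \<le> n \<Longrightarrow> norm w \<le> 1 \<Longrightarrow>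
                  norm (G n w - (1 - of_real (\<rho> n) * (1 - w))) \<le> G2 n * norm (1 - w)"
    and \<rho>: "\<And>n. 1 \<le> n \<Longrightarrow> 0 \<le> \<rho> n \<and> \<rho> n \<le> 1"
    and m: "\<And>n. 1 \<le> n \<Longrightarrow> 0 \<le> m n \<and> m n \<le> 1"
    and G2: "\<And>n. 1 \<le> n \<Longrightarrow> 0 \<le> G2 n"
    and lam: "0 \<le> lam"
    and d0: "0 \<le> d 0"
    and dS: "\<And>n. \<rho> (Suc n) * d n + exp (2 * lam) * lam * G2 (Suc n) + \<bar>m (Suc n) - lam * (1 - \<rho> (Suc n))\<bar>
                   + 2 * exp (2 * lam) * lam\<^sup>2 * (1 - \<rho> (Suc n))\<^sup>2 \<le> d (Suc n)"
    and w: "norm w \<le> 1"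
  shows "norm (\<phi> n w - poisson_gf (lam * (1 - (\<Prod>j = 1..n. \<rho> j))) w) \<le> d n * norm (1 - w)"
proof -
  have d_nonneg: "0 \<le> d k" for k
  proof (induction k)
    case (Suc k)
    have "0 \<le> \<rho> (Suc k) * d k + exp (2 * lam) * lam * G2 (Suc k)
        + \<bar>m (Suc k) - lam * (1 - \<rho> (Suc k))\<bar> + 2 * exp (2 * lam) * lam\<^sup>2 * (1 - \<rho> (Suc k))\<^sup>2"
      using Suc \<rho>[of "Suc k"] G2[of "Suc k"] lam by simp
    then show ?case using dS[of k] by linarith
  qed (rule d0)
  show ?thesis
    using w
  proof (induction n arbitrary: w)
    case 0
    then show ?case using d0 by (simp add: \<phi>0 poisson_gf_def)
  next
    case (Suc n)
    define a where "a = lam * (1 - (\<Prod>j = 1..n. \<rho> j))"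
    define r where "r = \<rho> (Suc n)"
    define b where "b = lam * (1 - r)"
    have r: "0 \<le> r" "r \<le> 1" using \<rho>[of "Suc n"] by (auto simp: r_def)
    have prod01: "0 \<le> (\<Prod>j = 1..n. \<rho> j)" "(\<Prod>j = 1..n. \<rho> j) \<le> 1"
      using \<rho> by (auto intro!: prod_nonneg prod_le_1)
    have a: "0 \<le> a" "a \<le> lam" using prod01 lam by (auto simp: a_def mult_left_le)
    have b: "0 \<le> b" "b \<le> lam" using r lam by (auto simp: b_def mult_left_le)
    have step: "norm (\<phi> n (G (Suc n) w) * (1 - of_real (m (Suc n)) * (1 - w)) - poisson_gf (a * r + b) w)
        \<le> (r * d n + exp (2 * a) * a * G2 (Suc n) + \<bar>m (Suc n) - b\<bar> + 2 * exp (2 * b) * b\<^sup>2) * norm (1 - w)"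
      using Suc.prems
      by (intro gf_error_step[where f = "\<phi> n"] Suc.IH[unfolded a_def[symmetric]] a(1) b(1) r d_nonneg)
         (auto simp: m G_disc G_mean G_lin r_def)
    have coeff: "r * d n + exp (2 * a) * a * G2 (Suc n) + \<bar>m (Suc n) - b\<bar> + 2 * exp (2 * b) * b\<^sup>2 \<le> d (Suc n)"
    proof -
      have "exp (2 * a) * a * G2 (Suc n) \<le> exp (2 * lam) * lam * G2 (Suc n)"
        using a G2[of "Suc n"] by (intro mult_right_mono mult_mono) auto
      moreover have "exp (2 * b) * b\<^sup>2 \<le> exp (2 * lam) * (lam\<^sup>2 * (1 - r)\<^sup>2)"
        using b by (intro mult_mono) (auto simp: b_def power_mult_distrib)
      ultimately show ?thesis using dS[of n] by (simp add: r_def b_def mult_ac)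
    qed
    have "a * r + b = lam * (1 - (\<Prod>j = 1..Suc n. \<rho> j))"
      by (simp add: a_def b_def r_def algebra_simps)
    hence "norm (\<phi> (Suc n) w - poisson_gf (lam * (1 - (\<Prod>j = 1..Suc n. \<rho> j))) w)
        \<le> (r * d n + exp (2 * a) * a * G2 (Suc n) + \<bar>m (Suc n) - b\<bar> + 2 * exp (2 * b) * b\<^sup>2) * norm (1 - w)"
      using step \<phi>S[OF Suc.prems] by simp
    also have "\<dots> \<le> d (Suc n) * norm (1 - w)" using coeff by (rule mult_right_mono) simp
    finally show ?case .
  qed
qed

lemma tendsto_poisson_gf:
  fixes f :: "nat \<Rightarrow> complex" and p d :: "nat \<Rightarrow> real"
  assumes err: "\<And>n. norm (f n - poisson_gf (lam * (1 - p n)) z) \<le> d n * norm (1 - z)"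
    and d: "d \<longlonglongrightarrow> 0" and p: "p \<longlonglongrightarrow> 0"
  shows "f \<longlonglongrightarrow> poisson_gf lam z"
proof -
  have "(\<lambda>n. f n - poisson_gf (lam * (1 - p n)) z) \<longlonglongrightarrow> 0"
  proof (rule Lim_null_comparison)
    show "\<forall>\<^sub>F n in sequentially. norm (f n - poisson_gf (lam * (1 - p n)) z) \<le> d n * norm (1 - z)"
      using err by simp
    show "(\<lambda>n. d n * norm (1 - z)) \<longlonglongrightarrow> 0"
      using tendsto_mult_left_zero[OF d] by simp
  qed
  moreover have "(\<lambda>n. poisson_gf (lam * (1 - p n)) z) \<longlonglongrightarrow> poisson_gf (lam * (1 - 0)) z"
    unfolding poisson_gf_def by (intro tendsto_intros p)
  ultimately have "(\<lambda>n. (f n - poisson_gf (lam * (1 - p n)) z) + poisson_gf (lam * (1 - p n)) z)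
      \<longlonglongrightarrow> 0 + poisson_gf (lam * (1 - 0)) z"
    by (rule tendsto_add)
  thus ?thesis by simp
qed

subsection \<open>Generating functions of \<open>\<nat>\<close>-valued random variables\<close>

lemma pow_taylor_bound:
  fixes w :: complex
  assumes w: "norm w \<le> 1"
  shows "norm (w ^ k - 1 + of_nat k * (1 - w)) \<le> real (k * (k - 1)) * norm (1 - w)"
proof (induction k)
  case (Suc k)
  have u2: "norm (1 - w) \<le> 2" using norm_triangle_ineq4[of 1 w] w by simp
  have "w ^ Suc k - 1 + of_nat (Suc k) * (1 - w)
      = w * (w ^ k - 1 + of_nat k * (1 - w)) + of_nat k * (1 - w)\<^sup>2"
    by (simp add: algebra_simps power2_eq_square)
  also have "norm \<dots> \<le> 1 * (real (k * (k - 1)) * norm (1 - w)) + real k * norm (1 - w) * 2"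
  proof (rule order_trans[OF norm_triangle_ineq add_mono])
    show "norm (w * (w ^ k - 1 + of_nat k * (1 - w))) \<le> 1 * (real (k * (k - 1)) * norm (1 - w))"
      unfolding norm_mult by (intro mult_mono Suc w) auto
    show "norm (of_nat k * (1 - w)\<^sup>2) \<le> real k * norm (1 - w) * 2"
      using u2 by (simp add: norm_mult norm_power power2_eq_square mult.assoc mult_left_mono)
  qed
  also have "\<dots> = real (Suc k * (Suc k - 1)) * norm (1 - w)"
    by (cases k) (auto simp: algebra_simps)
  finally show ?case .
qed simp

context prob_space
begin

definition pgf :: "('a \<Rightarrow> nat) \<Rightarrow> complex \<Rightarrow> complex" where
  "pgf Z z = (\<integral>\<omega>. z ^ Z \<omega> \<partial>M)"

lemma norm_integral_le1:
  fixes h :: "'a \<Rightarrow> complex"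
  assumes "\<And>\<omega>. norm (h \<omega>) \<le> 1"
  shows "norm (\<integral>\<omega>. h \<omega> \<partial>M) \<le> 1"
proof -
  have "norm (\<integral>\<omega>. h \<omega> \<partial>M) \<le> (\<integral>\<omega>. norm (h \<omega>) \<partial>M)" by (rule integral_norm_bound)
  also have "\<dots> \<le> (\<integral>\<omega>. 1 \<partial>M)"
  proof (cases "integrable M (\<lambda>\<omega>. norm (h \<omega>))")
    case True then show ?thesis using assms by (intro integral_mono) auto
  qed (simp add: not_integrable_integral_eq)
  finally show ?thesis by (simp add: prob_space)
qed

lemma norm_pgf_le1: "norm z \<le> 1 \<Longrightarrow> norm (pgf Z z) \<le> 1"
  unfolding pgf_def by (rule norm_integral_le1) (simp add: norm_power power_le_one)

lemma pgf_measurable: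
  fixes z :: complex
  shows "Z \<in> measurable M (count_space UNIV) \<Longrightarrow> (\<lambda>\<omega>. z ^ Z \<omega>) \<in> borel_measurable M"
  by (rule measurable_compose[of Z _ "count_space UNIV"]) simp_all

lemma pgf_integrable:
  fixes z :: complex
  shows "Z \<in> measurable M (count_space UNIV) \<Longrightarrow> norm z \<le> 1 \<Longrightarrow> integrable M (\<lambda>\<omega>. z ^ Z \<omega>)"
  by (rule integrable_const_bound[where B = 1]) (auto simp: norm_power power_le_one)

lemma pgf_mean_bound:
  assumes Z: "Z \<in> measurable M (count_space UNIV)"
    and int1: "integrable M (\<lambda>\<omega>. real (Z \<omega>))" and z: "norm z \<le> 1"
  shows "norm (1 - pgf Z z) \<le> expectation (\<lambda>\<omega>. real (Z \<omega>)) * norm (1 - z)"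
proof -
  have "1 - pgf Z z = (\<integral>\<omega>. 1 - z ^ Z \<omega> \<partial>M)"
    using pgf_integrable[OF Z z] by (simp add: pgf_def prob_space)
  also have "norm \<dots> \<le> (\<integral>\<omega>. norm (1 - z ^ Z \<omega>) \<partial>M)"
    by (rule integral_norm_bound)
  also have "\<dots> \<le> (\<integral>\<omega>. real (Z \<omega>) * norm (1 - z) \<partial>M)"
    using pgf_integrable[OF Z z] int1 norm_power_diff[of 1 z] z
    by (intro integral_mono) auto
  finally show ?thesis by simp
qed

lemma pgf_linear_bound:
  assumes Z: "Z \<in> measurable M (count_space UNIV)"
    and int1: "integrable M (\<lambda>\<omega>. real (Z \<omega>))"
    and int2: "integrable M (\<lambda>\<omega>. real (Z \<omega> * (Z \<omega> - 1)))" and z: "norm z \<le> 1"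
  shows "norm (pgf Z z - (1 - of_real (expectation (\<lambda>\<omega>. real (Z \<omega>))) * (1 - z)))
           \<le> expectation (\<lambda>\<omega>. real (Z \<omega> * (Z \<omega> - 1))) * norm (1 - z)"
proof -
  have int1': "integrable M (\<lambda>\<omega>. complex_of_real (real (Z \<omega>)))"
    using int1 by (rule integrable_of_real)
  have "pgf Z z - (1 - of_real (expectation (\<lambda>\<omega>. real (Z \<omega>))) * (1 - z))
      = (\<integral>\<omega>. z ^ Z \<omega> - 1 + of_nat (Z \<omega>) * (1 - z) \<partial>M)"
    using pgf_integrable[OF Z z] int1' integral_complex_of_real[of M "\<lambda>\<omega>. real (Z \<omega>)"]
    by (simp add: pgf_def prob_space algebra_simps)
  also have "norm \<dots> \<le> (\<integral>\<omega>. norm (z ^ Z \<omega> - 1 + of_nat (Z \<omega>) * (1 - z)) \<partial>M)"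
    by (rule integral_norm_bound)
  also have "\<dots> \<le> (\<integral>\<omega>. real (Z \<omega> * (Z \<omega> - 1)) * norm (1 - z) \<partial>M)"
    using pgf_integrable[OF Z z] int1' int2 pow_taylor_bound[OF z]
    by (intro integral_mono integrable_norm Bochner_Integration.integrable_add
          Bochner_Integration.integrable_diff integrable_mult_left) auto
  finally show ?thesis by simp
qed

lemma integral_sums_by_value:
  fixes Z :: "'a \<Rightarrow> nat" and h :: "'a \<Rightarrow> complex"
  assumes Z: "Z \<in> measurable M (count_space UNIV)" and h: "h \<in> borel_measurable M"
    and h_le: "\<And>\<omega>. norm (h \<omega>) \<le> 1"
  shows "(\<lambda>k. \<integral>\<omega>. (if Z \<omega> = k then h \<omega> else 0) \<partial>M) sums (\<integral>\<omega>. h \<omega> \<partial>M)"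
proof -
  have event_measurable: "{\<omega> \<in> space M. P (Z \<omega>)} \<in> sets M" for P
    using Z by (auto intro: measurable_sets)
  have piece_measurable: "(\<lambda>\<omega>. if P (Z \<omega>) then h \<omega> else 0) \<in> borel_measurable M" for P
    using event_measurable[of P] h by measurable
  have piece_integrable: "integrable M (\<lambda>\<omega>. if P (Z \<omega>) then h \<omega> else 0)" for P
    using piece_measurable h_le by (intro integrable_const_bound[where B = 1]) auto
  have partial: "(\<Sum>k<N. \<integral>\<omega>. (if Z \<omega> = k then h \<omega> else 0) \<partial>M)
      = (\<integral>\<omega>. (if Z \<omega> < N then h \<omega> else 0) \<partial>M)" for N
    using piece_integrable
    by (subst Bochner_Integration.integral_sum[symmetric]) (auto simp: sum.delta' intro!: Bochner_Integration.integral_cong)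
  have "(\<lambda>N. \<integral>\<omega>. (if Z \<omega> < N then h \<omega> else 0) \<partial>M) \<longlonglongrightarrow> (\<integral>\<omega>. h \<omega> \<partial>M)"
  proof (rule integral_dominated_convergence[where w = "\<lambda>_. 1"])
    show "AE \<omega> in M. (\<lambda>N. if Z \<omega> < N then h \<omega> else 0) \<longlonglongrightarrow> h \<omega>"
    proof (rule AE_I2)
      fix \<omega> show "(\<lambda>N. if Z \<omega> < N then h \<omega> else 0) \<longlonglongrightarrow> h \<omega>"
        by (intro tendsto_eventually eventually_sequentiallyI[of "Suc (Z \<omega>)"]) auto
    qed
  qed (use piece_measurable h h_le in auto)
  thus ?thesis unfolding sums_def partial .
qed

lemma pgf_sums:
  fixes z :: complex
  assumes Z: "Z \<in> measurable M (count_space UNIV)" and z: "norm z \<le> 1"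
  shows "(\<lambda>k. (\<integral>\<omega>. (if Z \<omega> = k then 1 else 0) \<partial>M) * z ^ k) sums pgf Z z"
proof -
  have "(\<integral>\<omega>. (if Z \<omega> = k then z ^ Z \<omega> else 0) \<partial>M) = (\<integral>\<omega>. (if Z \<omega> = k then 1 else 0) \<partial>M) * z ^ k" for k
  proof -
    have "(\<integral>\<omega>. (if Z \<omega> = k then z ^ Z \<omega> else 0) \<partial>M) = (\<integral>\<omega>. (if Z \<omega> = k then 1 else 0) * z ^ k \<partial>M)"
      by (rule Bochner_Integration.integral_cong) auto
    thus ?thesis by simp
  qed
  with integral_sums_by_value[OF Z pgf_measurable[OF Z], of z] z show ?thesis
    by (simp add: pgf_def norm_power power_le_one)
qed

lemma pgf_eq_if_same_law:
  assumes "Z \<in> measurable M (count_space UNIV)" "Z' \<in> measurable M (count_space UNIV)"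
    and "distr M (count_space UNIV) Z = distr M (count_space UNIV) Z'"
  shows "pgf Z z = pgf Z' z"
  using assms integral_distr[of Z M "count_space UNIV" "\<lambda>k. z ^ k"]
    integral_distr[of Z' M "count_space UNIV" "\<lambda>k. z ^ k"]
  by (simp add: pgf_def)

lemma pgf_bernoulli:
  assumes Z: "Z \<in> measurable M (count_space UNIV)"
    and law: "distr M (count_space UNIV) Z = measure_pmf (bernoulli_nat_pmf p)"
    and p: "0 \<le> p" "p \<le> 1"
  shows "pgf Z z = 1 - of_real p * (1 - z)"
proof -
  have "pgf Z z = (\<integral>k. z ^ k \<partial>measure_pmf (bernoulli_nat_pmf p))"
    using integral_distr[OF Z, of "\<lambda>k. z ^ k"] law by (simp add: pgf_def)
  also have "\<dots> = (\<integral>b. z ^ (if b then 1 else 0) \<partial>measure_pmf (bernoulli_pmf p))"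
    by (simp add: bernoulli_nat_pmf_def)
  also have "\<dots> = (\<Sum>b\<in>UNIV. pmf (bernoulli_pmf p) b *\<^sub>R z ^ (if b then 1 else 0))"
    by (rule integral_measure_pmf) auto
  also have "\<dots> = 1 - of_real p * (1 - z)"
    using p by (simp add: UNIV_bool scaleR_conv_of_real algebra_simps)
  finally show ?thesis .
qed

lemma char_real_law:
  assumes Z: "Z \<in> measurable M (count_space UNIV)"
  shows "char (real_law M Z) t = pgf Z (iexp t)"
proof -
  have "iexp (t * real k) = iexp t ^ k" for k
    using exp_of_nat_mult[of k "\<i> * complex_of_real t"] by (simp add: mult_ac)
  moreover have "(\<lambda>\<omega>. real (Z \<omega>)) \<in> borel_measurable M"
    using Z by (rule measurable_compose) simp
  ultimately show ?thesis
    by (simp add: char_def real_law_def pgf_def integral_distr)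
qed

lemma pgf_sum_indep:
  fixes Z :: "'i \<Rightarrow> 'a \<Rightarrow> nat" and z :: complex
  assumes I: "finite I" and indep: "indep_vars (\<lambda>_. count_space UNIV) Z I" and z: "norm z \<le> 1"
  shows "pgf (\<lambda>\<omega>. \<Sum>i\<in>I. Z i \<omega>) z = (\<Prod>i\<in>I. pgf (Z i) z)"
proof -
  have Z: "Z i \<in> measurable M (count_space UNIV)" if "i \<in> I" for i
    using indep that by (auto simp: indep_vars_def)
  have "indep_vars (\<lambda>_. borel) (\<lambda>i \<omega>. z ^ Z i \<omega>) I"
    by (rule indep_vars_compose2[OF indep]) simp
  hence "(\<integral>\<omega>. (\<Prod>i\<in>I. z ^ Z i \<omega>) \<partial>M) = (\<Prod>i\<in>I. \<integral>\<omega>. z ^ Z i \<omega> \<partial>M)"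
    using I Z pgf_integrable[OF _ z] by (intro indep_vars_lebesgue_integral) auto
  thus ?thesis by (simp add: pgf_def power_sum)
qed

end

subsection \<open>The branching process with immigration\<close>

type_synonym bgw_index = "(nat \<times> nat) + nat"

text \<open>The variables are indexed by \<open>Inl (n, j)\<close> (the \<open>j\<close>-th offspring variable of generation \<open>n\<close>) and
  \<open>Inr n\<close> (the immigration of generation \<open>n\<close>). The population size is a deterministic function of
  the realised values; generation \<open>n\<close> depends only on the indices in \<open>generations_upto n\<close>, and given
  \<open>X n = k\<close>, generation \<open>n + 1\<close> is the sum over \<open>next_generation n k\<close>.\<close>
fun population :: "nat \<Rightarrow> (bgw_index \<Rightarrow> nat) \<Rightarrow> nat" where
  "population 0 f = 0"
| "population (Suc n) f = (\<Sum>j = 1..population n f. f (Inl (Suc n, j))) + f (Inr (Suc n))"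

definition generations_upto :: "nat \<Rightarrow> bgw_index set" where
  "generations_upto n = {Inl (k, j) | k j. 1 \<le> k \<and> k \<le> n \<and> 1 \<le> j} \<union> {Inr k | k. 1 \<le> k \<and> k \<le> n}"

definition next_generation :: "nat \<Rightarrow> nat \<Rightarrow> bgw_index set" where
  "next_generation n k = (\<lambda>j. Inl (Suc n, j)) ` {1..k} \<union> {Inr (Suc n)}"

lemma generations_upto_mono: "generations_upto n \<subseteq> generations_upto (Suc n)"
  by (auto simp: generations_upto_def)

lemma population_cong:
  "(\<And>i. i \<in> generations_upto n \<Longrightarrow> f i = g i) \<Longrightarrow> population n f = population n g"
proof (induction n)
  case (Suc n)
  then have "population n f = population n g"
    using generations_upto_mono by blast
  moreover have "f (Inl (Suc n, j)) = g (Inl (Suc n, j))" if "1 \<le> j" for j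
    using Suc.prems[of "Inl (Suc n, j)"] that by (auto simp: generations_upto_def)
  moreover have "f (Inr (Suc n)) = g (Inr (Suc n))"
    using Suc.prems[of "Inr (Suc n)"] by (auto simp: generations_upto_def)
  ultimately show ?case by simp
qed simp

lemma population_measurable:
  "generations_upto n \<subseteq> J \<Longrightarrow> population n \<in> measurable (PiM J (\<lambda>_. count_space UNIV)) (count_space UNIV)"
proof (induction n)
  case (Suc n)
  then have IH: "population n \<in> measurable (PiM J (\<lambda>_. count_space UNIV)) (count_space UNIV)"
    using generations_upto_mono by blast
  have J: "\<And>j. j \<in> {1..k} \<Longrightarrow> Inl (Suc n, j) \<in> J" "Inr (Suc n) \<in> J" for k
    using Suc.prems by (auto simp: generations_upto_def)
  have "(\<lambda>f. (\<lambda>k f. (\<Sum>j = 1..k. f (Inl (Suc n, j))) + f (Inr (Suc n))) (population n f) f)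
      \<in> measurable (PiM J (\<lambda>_. count_space UNIV)) (count_space UNIV)"
    by (rule measurable_compose_countable[OF _ IH]) (use J in measurable)
  thus ?case by simp
next
  case 0
  have "population 0 = (\<lambda>_. 0)" by (rule ext) simp
  thus ?case by simp
qed

lemma next_generation_sum:
  "(\<Sum>i\<in>next_generation n k. g i) = (\<Sum>j = 1..k. g (Inl (Suc n, j))) + g (Inr (Suc n))"
  by (simp add: next_generation_def sum.reindex inj_on_def image_iff add.commute)

lemma next_generation_prod:
  "(\<Prod>i\<in>next_generation n k. g i) = (\<Prod>j = 1..k. g (Inl (Suc n, j))) * g (Inr (Suc n))"
  by (simp add: next_generation_def prod.reindex inj_on_def image_iff mult.commute)

locale bgw = prob_space M for M :: "'a measure" +
  fixes \<xi> :: "nat \<Rightarrow> nat \<Rightarrow> 'a \<Rightarrow> nat" and \<epsilon> :: "nat \<Rightarrow> 'a \<Rightarrow> nat" and X :: "nat \<Rightarrow> 'a \<Rightarrow> nat"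
  assumes indep: "indep_vars (\<lambda>_. count_space UNIV)
          (\<lambda>i. case i of Inl (n, j) \<Rightarrow> \<xi> n j | Inr n \<Rightarrow> \<epsilon> n)
          ({Inl (n, j) | n j. 1 \<le> n \<and> 1 \<le> j} \<union> {Inr n | n. 1 \<le> n})"
    and X0: "\<And>\<omega>. X 0 \<omega> = 0"
    and XS: "\<And>n \<omega>. X (Suc n) \<omega> = (\<Sum>j = 1..X n \<omega>. \<xi> (Suc n) j \<omega>) + \<epsilon> (Suc n) \<omega>"
begin

definition Y :: "bgw_index \<Rightarrow> 'a \<Rightarrow> nat" where
  "Y i = (case i of Inl (n, j) \<Rightarrow> \<xi> n j | Inr n \<Rightarrow> \<epsilon> n)"

definition indices :: "bgw_index set" where
  "indices = {Inl (n, j) | n j. 1 \<le> n \<and> 1 \<le> j} \<union> {Inr n | n. 1 \<le> n}"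

lemma indep_Y: "indep_vars (\<lambda>_. count_space UNIV) Y indices"
  using indep unfolding Y_def[abs_def] indices_def .

lemma Y_measurable: "i \<in> indices \<Longrightarrow> Y i \<in> measurable M (count_space UNIV)"
  using indep_Y by (auto simp: indep_vars_def)

lemma xi_measurable: "1 \<le> n \<Longrightarrow> 1 \<le> j \<Longrightarrow> \<xi> n j \<in> measurable M (count_space UNIV)"
  using Y_measurable[of "Inl (n, j)"] by (simp add: indices_def Y_def)

lemma eps_measurable: "1 \<le> n \<Longrightarrow> \<epsilon> n \<in> measurable M (count_space UNIV)"
  using Y_measurable[of "Inr n"] by (simp add: indices_def Y_def)

lemma X_population: "X n \<omega> = population n (restrict (\<lambda>i. Y i \<omega>) (generations_upto n))"
proof -
  have "X n \<omega> = population n (\<lambda>i. Y i \<omega>)"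
    by (induction n) (simp_all add: X0 XS Y_def)
  also have "\<dots> = population n (restrict (\<lambda>i. Y i \<omega>) (generations_upto n))"
    by (rule population_cong) simp
  finally show ?thesis .
qed

lemma generations_upto_indices: "generations_upto n \<subseteq> indices"
  by (auto simp: generations_upto_def indices_def)

lemma X_measurable: "X n \<in> measurable M (count_space UNIV)"
proof -
  have "(\<lambda>\<omega>. population n (restrict (\<lambda>i. Y i \<omega>) (generations_upto n))) \<in> measurable M (count_space UNIV)"
    using Y_measurable generations_upto_indices
    by (intro measurable_compose[OF measurable_restrict population_measurable]) auto
  thus ?thesis unfolding X_population[symmetric] by simp
qed

lemma X_indep_future:
  fixes h :: "nat \<Rightarrow> complex" and F :: "(bgw_index \<Rightarrow> nat) \<Rightarrow> complex"
  assumes S: "S \<subseteq> indices" "S \<inter> generations_upto n = {}"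
    and F: "F \<in> borel_measurable (PiM S (\<lambda>_. count_space UNIV))"
  shows "indep_var borel (\<lambda>\<omega>. h (X n \<omega>)) borel (\<lambda>\<omega>. F (restrict (\<lambda>i. Y i \<omega>) S))"
proof -
  have "indep_var borel ((h \<circ> population n) \<circ> (\<lambda>\<omega>. restrict (\<lambda>i. Y i \<omega>) (generations_upto n)))
      borel (F \<circ> (\<lambda>\<omega>. restrict (\<lambda>i. Y i \<omega>) S))"
    using S generations_upto_indices
    by (intro indep_var_compose[OF indep_var_restrict[OF indep_Y]] F
          measurable_comp[OF population_measurable]) auto
  thus ?thesis by (simp add: o_def X_population[symmetric])
qed

lemma integral_X_next:
  fixes z :: complex
  assumes z: "norm z \<le> 1"
  shows "(\<integral>\<omega>. (if X n \<omega> = k then z ^ X (Suc n) \<omega> else 0) \<partial>M)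
       = (\<integral>\<omega>. (if X n \<omega> = k then 1 else 0) \<partial>M) * (\<Prod>i\<in>next_generation n k. pgf (Y i) z)"
proof -
  let ?S = "next_generation n k"
  have S: "finite ?S" "?S \<subseteq> indices" "?S \<inter> generations_upto n = {}"
    by (auto simp: next_generation_def indices_def generations_upto_def)
  have next_sum: "X (Suc n) \<omega> = (\<Sum>i\<in>?S. Y i \<omega>)" if "X n \<omega> = k" for \<omega>
    using that by (simp add: XS next_generation_sum Y_def)
  have "indep_var borel (\<lambda>\<omega>. if X n \<omega> = k then 1 else 0)
      borel (\<lambda>\<omega>. (\<lambda>f. z ^ (\<Sum>i\<in>?S. f i)) (restrict (\<lambda>i. Y i \<omega>) ?S))"
    (is "indep_var borel ?A borel ?B") using S by (intro X_indep_future) auto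
  moreover have "integrable M ?A" "integrable M ?B"
    using indep_var_rv1[OF calculation] indep_var_rv2[OF calculation] z
    by (auto intro!: integrable_const_bound[where B = 1] simp: norm_power power_le_one)
  ultimately have "(\<integral>\<omega>. ?A \<omega> * ?B \<omega> \<partial>M) = (\<integral>\<omega>. ?A \<omega> \<partial>M) * pgf (\<lambda>\<omega>. \<Sum>i\<in>?S. Y i \<omega>) z"
    by (simp add: pgf_def indep_var_lebesgue_integral)
  moreover have "(\<integral>\<omega>. (if X n \<omega> = k then z ^ X (Suc n) \<omega> else 0) \<partial>M) = (\<integral>\<omega>. ?A \<omega> * ?B \<omega> \<partial>M)"
    by (rule Bochner_Integration.integral_cong) (simp_all add: next_sum)
  ultimately have "(\<integral>\<omega>. (if X n \<omega> = k then z ^ X (Suc n) \<omega> else 0) \<partial>M)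
      = (\<integral>\<omega>. (if X n \<omega> = k then 1 else 0) \<partial>M) * pgf (\<lambda>\<omega>. \<Sum>i\<in>?S. Y i \<omega>) z"
    by simp
  also have "pgf (\<lambda>\<omega>. \<Sum>i\<in>?S. Y i \<omega>) z = (\<Prod>i\<in>?S. pgf (Y i) z)"
    using S z by (intro pgf_sum_indep indep_vars_subset[OF indep_Y]) auto
  finally show ?thesis .
qed

lemma pgf_X_Suc:
  fixes z :: complex
  assumes z: "norm z \<le> 1"
    and ident: "\<And>j. 1 \<le> j \<Longrightarrow> distr M (count_space UNIV) (\<xi> (Suc n) j) = distr M (count_space UNIV) (\<xi> (Suc n) 1)"
  shows "pgf (X (Suc n)) z = pgf (X n) (pgf (\<xi> (Suc n) 1) z) * pgf (\<epsilon> (Suc n)) z"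
proof -
  define G where "G = pgf (\<xi> (Suc n) 1) z"
  define B where "B = pgf (\<epsilon> (Suc n)) z"
  have offspring: "pgf (\<xi> (Suc n) j) z = G" if "1 \<le> j" for j
    unfolding G_def using that
    by (intro pgf_eq_if_same_law[OF xi_measurable xi_measurable ident]) simp_all
  have "(\<Prod>i\<in>next_generation n k. pgf (Y i) z) = G ^ k * B" for k
    using offspring by (simp add: next_generation_prod Y_def B_def)
  hence terms: "(\<integral>\<omega>. (if X n \<omega> = k then z ^ X (Suc n) \<omega> else 0) \<partial>M)
      = (\<integral>\<omega>. (if X n \<omega> = k then 1 else 0) \<partial>M) * G ^ k * B" for k
    by (simp only: integral_X_next[OF z] mult.assoc)
  have "(\<lambda>k. \<integral>\<omega>. (if X n \<omega> = k then z ^ X (Suc n) \<omega> else 0) \<partial>M) sums pgf (X (Suc n)) z"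
    unfolding pgf_def using z
    by (intro integral_sums_by_value X_measurable pgf_measurable) (simp add: norm_power power_le_one)
  moreover have "(\<lambda>k. (\<integral>\<omega>. (if X n \<omega> = k then 1 else 0) \<partial>M) * G ^ k * B) sums (pgf (X n) G * B)"
    unfolding G_def by (intro sums_mult2 pgf_sums X_measurable norm_pgf_le1 z)
  ultimately show ?thesis unfolding terms G_def B_def by (rule sums_unique2)
qed

end

text \<open>Here \<open>\<rho> n\<close> is the offspring mean, \<open>G2 n\<close> the second factorial moment
  \<open>G\<^sub>n''(1)\<close>, and \<open>m n\<close> the immigration probability in generation \<open>n\<close>.\<close>
locale bgw_bernoulli = bgw M \<xi> \<epsilon> X for M :: "'a measure" and \<xi> \<epsilon> X +
  fixes \<rho> G2 m :: "nat \<Rightarrow> real"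
  assumes ident: "\<And>n j. 1 \<le> n \<Longrightarrow> 1 \<le> j \<Longrightarrow>
          distr M (count_space UNIV) (\<xi> n j) = distr M (count_space UNIV) (\<xi> n 1)"
    and int1: "\<And>n. 1 \<le> n \<Longrightarrow> integrable M (\<lambda>\<omega>. real (\<xi> n 1 \<omega>))"
    and rho_mean: "\<And>n. 1 \<le> n \<Longrightarrow> \<rho> n = expectation (\<lambda>\<omega>. real (\<xi> n 1 \<omega>))"
    and int2: "\<And>n. 1 \<le> n \<Longrightarrow> integrable M (\<lambda>\<omega>. real (\<xi> n 1 \<omega> * (\<xi> n 1 \<omega> - 1)))"
    and G2_moment: "\<And>n. 1 \<le> n \<Longrightarrow> G2 n = expectation (\<lambda>\<omega>. real (\<xi> n 1 \<omega> * (\<xi> n 1 \<omega> - 1)))"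
    and m_range: "\<And>n. 1 \<le> n \<Longrightarrow> 0 \<le> m n \<and> m n \<le> 1"
    and eps_bern: "\<And>n. 1 \<le> n \<Longrightarrow> distr M (count_space UNIV) (\<epsilon> n) = measure_pmf (bernoulli_nat_pmf (m n))"
begin

lemma rho_nonneg: "1 \<le> n \<Longrightarrow> 0 \<le> \<rho> n"
  by (simp add: rho_mean)

lemma G2_nonneg: "1 \<le> n \<Longrightarrow> 0 \<le> G2 n"
  by (simp add: G2_moment)

lemma pgf_X_recursion:
  "norm w \<le> 1 \<Longrightarrow> pgf (X (Suc n)) w = pgf (X n) (pgf (\<xi> (Suc n) 1) w) * (1 - of_real (m (Suc n)) * (1 - w))"
  using pgf_X_Suc[OF _ ident] pgf_bernoulli[OF eps_measurable eps_bern, of "Suc n"] m_range[of "Suc n"]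
  by simp

lemma pgf_X_poisson_error:
  fixes lam :: real and d :: "nat \<Rightarrow> real"
  assumes rho_le: "\<And>n. 1 \<le> n \<Longrightarrow> \<rho> n \<le> 1" and lam: "0 \<le> lam" and d0: "0 \<le> d 0"
    and dS: "\<And>n. \<rho> (Suc n) * d n + exp (2 * lam) * lam * G2 (Suc n) + \<bar>m (Suc n) - lam * (1 - \<rho> (Suc n))\<bar>
                   + 2 * exp (2 * lam) * lam\<^sup>2 * (1 - \<rho> (Suc n))\<^sup>2 \<le> d (Suc n)"
    and z: "norm z \<le> 1"
  shows "norm (pgf (X n) z - poisson_gf (lam * (1 - (\<Prod>j = 1..n. \<rho> j))) z) \<le> d n * norm (1 - z)"
proof (rule gf_error_bound[where G = "\<lambda>n. pgf (\<xi> n 1)"])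
  show "pgf (X 0) w = 1" for w by (simp add: pgf_def X0 prob_space)
  show "norm (1 - pgf (\<xi> n 1) w) \<le> \<rho> n * norm (1 - w)" if "1 \<le> n" "norm w \<le> 1" for n w
    using pgf_mean_bound[OF xi_measurable int1 that(2)] that(1) rho_mean[OF that(1)] by simp
  show "norm (pgf (\<xi> n 1) w - (1 - of_real (\<rho> n) * (1 - w))) \<le> G2 n * norm (1 - w)"
    if "1 \<le> n" "norm w \<le> 1" for n w
    using pgf_linear_bound[OF xi_measurable int1 int2 that(2)] that(1) rho_mean[OF that(1)]
      G2_moment[OF that(1)] by simp
  show "norm (pgf (\<xi> n 1) w) \<le> 1" if "norm w \<le> 1" for n w
    using that by (rule norm_pgf_le1)
  show "0 \<le> \<rho> n \<and> \<rho> n \<le> 1" if "1 \<le> n" for n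
    using rho_nonneg[OF that] rho_le[OF that] by simp
qed (fact pgf_X_recursion m_range G2_nonneg lam d0 dS z)+

text \<open>Under conditions (i) and (ii) the generating functions converge to that of \<open>Poisson(\<lambda>)\<close>:
  the exact solution of the error recursion tends to \<open>0\<close>, and so does \<open>\<rho>\<^sub>1\<cdots>\<rho>\<^sub>n\<close>.\<close>
lemma pgf_X_tendsto_poisson:
  fixes lam :: real
  assumes rho_lt: "\<And>n. 1 \<le> n \<Longrightarrow> \<rho> n < 1" and rho_lim: "\<rho> \<longlonglongrightarrow> 1"
    and rho_div: "filterlim (\<lambda>N. \<Sum>n = 1..N. 1 - \<rho> n) at_top sequentially"
    and G2_lim: "(\<lambda>n. G2 n / (1 - \<rho> n)) \<longlonglongrightarrow> 0"
    and lam: "0 \<le> lam" and m_lim: "(\<lambda>n. m n / (1 - \<rho> n)) \<longlonglongrightarrow> lam"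
    and z: "norm z \<le> 1"
  shows "(\<lambda>n. pgf (X n) z) \<longlonglongrightarrow> poisson_gf lam z"
proof -
  define c where "c n = exp (2 * lam) * lam * G2 n + \<bar>m n - lam * (1 - \<rho> n)\<bar>
      + 2 * exp (2 * lam) * lam\<^sup>2 * (1 - \<rho> n)\<^sup>2" for n
  define d where "d = rec_nat 0 (\<lambda>n x. \<rho> (Suc n) * x + c (Suc n))"
  have d0: "d 0 = 0" and dS: "d (Suc n) = \<rho> (Suc n) * d n + c (Suc n)" for n
    by (simp_all add: d_def)
  have "d \<longlonglongrightarrow> 0"
  proof (rule linear_recursion_tendsto_zero[OF rho_nonneg rho_lt rho_div])
    show "0 \<le> c n" if "1 \<le> n" for n
      using G2_nonneg[OF that] lam by (simp add: c_def)
    show "(\<lambda>n. c n / (1 - \<rho> n)) \<longlonglongrightarrow> 0"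
      unfolding c_def by (rule error_rate_tendsto_zero[OF rho_lt rho_lim G2_lim m_lim])
  qed (simp_all add: d0 dS)
  moreover have "(\<lambda>n. \<Prod>j = 1..n. \<rho> j) \<longlonglongrightarrow> 0"
    using prod_tail_tendsto_zero[OF rho_nonneg rho_div, of 0] by simp
  moreover have "norm (pgf (X n) z - poisson_gf (lam * (1 - (\<Prod>j = 1..n. \<rho> j))) z) \<le> d n * norm (1 - z)" for n
    using rho_lt lam z by (intro pgf_X_poisson_error) (auto simp: d0 dS c_def less_imp_le)
  ultimately show ?thesis
    by (intro tendsto_poisson_gf)
qed

end

lemma pgf_poisson0:
  fixes z :: complex
  assumes lam: "0 \<le> lam" and z: "norm z \<le> 1"
  shows "measure_pmf.pgf (poisson0_pmf lam) (\<lambda>k. k) z = poisson_gf lam z"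
proof (cases "lam = 0")
  case True
  then show ?thesis
    by (simp add: measure_pmf.pgf_def poisson0_pmf_def poisson_gf_def integral_measure_pmf[of "{0}"])
next
  case False
  with lam have pos: "0 < lam" by simp
  have series_term: "(\<integral>\<omega>. (if \<omega> = k then 1 else 0) \<partial>measure_pmf (poisson_pmf lam)) * z ^ k
      = of_real (exp (- lam)) * ((of_real lam * z) ^ k /\<^sub>R fact k)" for k
    using pos by (subst integral_measure_pmf[of "{k}"])
      (auto simp: scaleR_conv_of_real power_mult_distrib field_simps split: if_splits)
  have "(\<lambda>k. (\<integral>\<omega>. (if \<omega> = k then 1 else 0) \<partial>measure_pmf (poisson_pmf lam)) * z ^ k)
      sums measure_pmf.pgf (poisson_pmf lam) (\<lambda>k. k) z"
    using z by (intro measure_pmf.pgf_sums) simp_all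
  moreover have "(\<lambda>k. of_real (exp (- lam)) * ((of_real lam * z) ^ k /\<^sub>R fact k))
      sums (of_real (exp (- lam)) * exp (of_real lam * z))"
    by (rule sums_mult[OF exp_converges])
  ultimately have "measure_pmf.pgf (poisson_pmf lam) (\<lambda>k. k) z = of_real (exp (- lam)) * exp (of_real lam * z)"
    unfolding series_term by (rule sums_unique2)
  with False show ?thesis
    by (simp add: poisson0_pmf_def poisson_gf_def exp_of_real[symmetric] exp_add[symmetric] algebra_simps)
qed

theorem theorem1:
  fixes M :: "'a measure"
    and \<xi> :: "nat \<Rightarrow> nat \<Rightarrow> 'a \<Rightarrow> nat"
    and \<epsilon> :: "nat \<Rightarrow> 'a \<Rightarrow> nat"
    and X :: "nat \<Rightarrow> 'a \<Rightarrow> nat"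
    and \<rho> G2 m :: "nat \<Rightarrow> real"
    and lam :: real
  assumes P: "prob_space M"
    and indep: "prob_space.indep_vars M (\<lambda>_. count_space UNIV)
          (\<lambda>i. case i of Inl (n, j) \<Rightarrow> \<xi> n j | Inr n \<Rightarrow> \<epsilon> n)
          ({Inl (n, j) | n j. 1 \<le> n \<and> 1 \<le> j} \<union> {Inr n | n. 1 \<le> n})"
    and ident: "\<And>n j. 1 \<le> n \<Longrightarrow> 1 \<le> j \<Longrightarrow>
          distr M (count_space UNIV) (\<xi> n j) = distr M (count_space UNIV) (\<xi> n 1)"
    and X0: "\<And>\<omega>. X 0 \<omega> = 0"
    and XS: "\<And>n \<omega>. X (Suc n) \<omega> = (\<Sum>j = 1..X n \<omega>. \<xi> (Suc n) j \<omega>) + \<epsilon> (Suc n) \<omega>"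
    and int1: "\<And>n. 1 \<le> n \<Longrightarrow> integrable M (\<lambda>\<omega>. real (\<xi> n 1 \<omega>))"
    and rho_def: "\<And>n. 1 \<le> n \<Longrightarrow> \<rho> n = prob_space.expectation M (\<lambda>\<omega>. real (\<xi> n 1 \<omega>))"
    and int2: "\<And>n. 1 \<le> n \<Longrightarrow> integrable M (\<lambda>\<omega>. real (\<xi> n 1 \<omega> * (\<xi> n 1 \<omega> - 1)))"
    and G2_def: "\<And>n. 1 \<le> n \<Longrightarrow>
          G2 n = prob_space.expectation M (\<lambda>\<omega>. real (\<xi> n 1 \<omega> * (\<xi> n 1 \<omega> - 1)))"
    and m_range: "\<And>n. 1 \<le> n \<Longrightarrow> 0 \<le> m n \<and> m n \<le> 1"
    and eps_bern: "\<And>n. 1 \<le> n \<Longrightarrow>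
          distr M (count_space UNIV) (\<epsilon> n) = measure_pmf (bernoulli_nat_pmf (m n))"
    and rho_lt: "\<And>n. 1 \<le> n \<Longrightarrow> \<rho> n < 1"
    and rho_lim: "\<rho> \<longlonglongrightarrow> 1"
    and rho_div: "filterlim (\<lambda>N. \<Sum>n = 1..N. 1 - \<rho> n) at_top sequentially"
    and G2_lim: "(\<lambda>n. G2 n / (1 - \<rho> n)) \<longlonglongrightarrow> 0"
    and lam_nonneg: "0 \<le> lam"
    and m_lim: "(\<lambda>n. m n / (1 - \<rho> n)) \<longlonglongrightarrow> lam"
  shows "weak_conv_m (\<lambda>n. real_law M (X n))
           (distr (measure_pmf (poisson0_pmf lam)) borel real)"
proof -
  interpret bgw_bernoulli M \<xi> \<epsilon> X \<rho> G2 m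
    by (intro bgw_bernoulli.intro bgw.intro bgw_axioms.intro bgw_bernoulli_axioms.intro
          P indep X0 XS ident int1 rho_def int2 G2_def m_range eps_bern)
  have pgf_conv: "(\<lambda>n. pgf (X n) z) \<longlonglongrightarrow> poisson_gf lam z" if "norm z \<le> 1" for z
    using rho_lt rho_lim rho_div G2_lim lam_nonneg m_lim that by (rule pgf_X_tendsto_poisson)
  text \<open>On the unit circle the generating functions are the characteristic functions.\<close>
  show ?thesis
  proof (rule levy_continuity)
    show "real_distribution (real_law M (X n))" for n
      unfolding real_law_def
      by (rule real_distribution_distr, rule measurable_compose[OF X_measurable]) simp
    show "real_distribution (distr (measure_pmf (poisson0_pmf lam)) borel real)"
      by (rule prob_space.real_distribution_distr[OF prob_space_measure_pmf]) simp
    show "(\<lambda>n. char (real_law M (X n)) t) \<longlonglongrightarrow> char (distr (measure_pmf (poisson0_pmf lam)) borel real) t" for t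
      using pgf_conv[of "iexp t"] measure_pmf.char_real_law[of "\<lambda>k. k" "poisson0_pmf lam" t, unfolded real_law_def]
      by (simp add: char_real_law X_measurable pgf_poisson0 lam_nonneg)
  qed
qed

end
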